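(* Let $d\ge 2$, $\lambda>0$, $L\ge 1$ an integer, and let $R(z)=(H_L-z)^{-1}$ for $z\in\mathbb{C}$ with $\operatorname{Im}z>0$, where $H_L=\Delta_L+\lambda V$ on $\ell^2(\mathbb{Z}^d_L)$, $\Delta_L$ the nearest-neighbour Laplacian on $\mathbb{Z}^d_L=\mathbb{Z}^d/L\mathbb{Z}^d$ and $V=\sum_x g_x|x\rangle\langle x|$ with $(g_x)$ i.i.d. standard Gaussians. Let $\tilde\theta(z):=\mathbb{E}R_{00}(z)$ and $\tilde M(z):=(\Delta_L-(z+\lambda^2\tilde\theta(z)))^{-1}$. Then $$\mathbb{E}R=\tilde M(\mathrm{Id}+\mathfrak{E}_{\rm loc}),\qquad \mathfrak{E}_{\rm loc}:=\lambda^2\,\mathbb{E}\big(\mathcal{D}[R-\mathbb{E}R]\,R\big).$$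
   Context: For an operator $A$ on $\ell^2(\mathbb{Z}^d_L)$, $\mathcal{D}[A]:=\sum_{x}A_{xx}|x\rangle\langle x|$ is the diagonal part of $A$ (here $|x\rangle\langle x|$ is the rank-one projection onto the basis vector $\delta_x$). *)

theory Defs
  imports "HOL-Probability.Probability"
begin

text \<open>Points of the discrete torus Z^d_L = Z^d / L Z^d, represented by canonical
  coordinates in {0..L-1} for the first d coordinates (and 0 elsewhere).\<close>
definition torus :: "nat \<Rightarrow> nat \<Rightarrow> (nat \<Rightarrow> nat) set" where
  "torus d L = {x. (\<forall>i<d. x i < L) \<and> (\<forall>i\<ge>d. x i = 0)}"

definition origin :: "nat \<Rightarrow> nat" where
  "origin = (\<lambda>_. 0)"

definition step_plus :: "nat \<Rightarrow> nat \<Rightarrow> (nat \<Rightarrow> nat) \<Rightarrow> (nat \<Rightarrow> nat)" where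
  "step_plus L i x = x(i := (x i + 1) mod L)"

definition step_minus :: "nat \<Rightarrow> nat \<Rightarrow> (nat \<Rightarrow> nat) \<Rightarrow> (nat \<Rightarrow> nat)" where
  "step_minus L i x = x(i := (x i + L - 1) mod L)"

text \<open>Operators on l^2(Z^d_L) as complex matrices indexed by torus points
  (entries outside the torus are irrelevant / zero).\<close>
type_synonym op = "(nat \<Rightarrow> nat) \<Rightarrow> (nat \<Rightarrow> nat) \<Rightarrow> complex"

definition mat_id :: "(nat \<Rightarrow> nat) set \<Rightarrow> op" where
  "mat_id T = (\<lambda>x y. if x \<in> T \<and> y \<in> T \<and> x = y then 1 else 0)"

definition mat_mult :: "(nat \<Rightarrow> nat) set \<Rightarrow> op \<Rightarrow> op \<Rightarrow> op" where
  "mat_mult T A B = (\<lambda>x y. if x \<in> T \<and> y \<in> T then (\<Sum>w\<in>T. A x w * B w y) else 0)"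

definition mat_add :: "(nat \<Rightarrow> nat) set \<Rightarrow> op \<Rightarrow> op \<Rightarrow> op" where
  "mat_add T A B = (\<lambda>x y. if x \<in> T \<and> y \<in> T then A x y + B x y else 0)"

definition mat_extensional :: "(nat \<Rightarrow> nat) set \<Rightarrow> op \<Rightarrow> bool" where
  "mat_extensional T B \<longleftrightarrow> (\<forall>x y. x \<notin> T \<or> y \<notin> T \<longrightarrow> B x y = 0)"

definition mat_inv :: "(nat \<Rightarrow> nat) set \<Rightarrow> op \<Rightarrow> op" where
  "mat_inv T A = (THE B. mat_extensional T B \<and> mat_mult T A B = mat_id T \<and> mat_mult T B A = mat_id T)"

definition diag_part :: "(nat \<Rightarrow> nat) set \<Rightarrow> op \<Rightarrow> op" where
  "diag_part T A = (\<lambda>x y. if x \<in> T \<and> y \<in> T \<and> x = y then A x x else 0)"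

definition laplacian :: "nat \<Rightarrow> nat \<Rightarrow> op" where
  "laplacian d L = (\<lambda>x y. if x \<in> torus d L \<and> y \<in> torus d L then
      (\<Sum>i<d. (of_bool (y = step_plus L i x) + of_bool (y = step_minus L i x)))
      - 2 * of_nat d * of_bool (x = y)
    else 0)"

definition hamiltonian :: "nat \<Rightarrow> nat \<Rightarrow> real \<Rightarrow> ((nat \<Rightarrow> nat) \<Rightarrow> real) \<Rightarrow> op" where
  "hamiltonian d L lam g = (\<lambda>x y. laplacian d L x y +
      (if x \<in> torus d L \<and> y \<in> torus d L \<and> x = y then complex_of_real (lam * g x) else 0))"

definition resolvent :: "nat \<Rightarrow> nat \<Rightarrow> real \<Rightarrow> ((nat \<Rightarrow> nat) \<Rightarrow> real) \<Rightarrow> complex \<Rightarrow> op" where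
  "resolvent d L lam g z = mat_inv (torus d L)
     (\<lambda>x y. hamiltonian d L lam g x y - z * mat_id (torus d L) x y)"

definition gauss_field :: "(nat \<Rightarrow> nat) set \<Rightarrow> ((nat \<Rightarrow> nat) \<Rightarrow> real) measure" where
  "gauss_field T = PiM T (\<lambda>_. density lborel std_normal_density)"

definition expect_mat :: "(nat \<Rightarrow> nat) set \<Rightarrow> (((nat \<Rightarrow> nat) \<Rightarrow> real) \<Rightarrow> op) \<Rightarrow> op" where
  "expect_mat T F = (\<lambda>x y. \<integral>g. F g x y \<partial>(gauss_field T))"

end

theory Submission
  imports Defs "Jordan_Normal_Form.Determinant" "HOL-Real_Asymp.Real_Asymp"
begin

text \<open>
  Write \<open>H = \<Delta> + \<lambda>V\<close> and \<open>R = (H - z)\<^sup>-\<^sup>1\<close>. Row \<open>x\<close> of \<open>(H - z) R = Id\<close> reads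
  \<open>((\<Delta> - z) R)\<^sub>x\<^sub>y + \<lambda> g\<^sub>x R\<^sub>x\<^sub>y = \<delta>\<^sub>x\<^sub>y\<close>. Gaussian integration by parts
  \<open>E (g\<^sub>x F) = E (\<partial>F/\<partial>g\<^sub>x)\<close> together with \<open>\<partial>R\<^sub>x\<^sub>y/\<partial>g\<^sub>x = -\<lambda> R\<^sub>x\<^sub>x R\<^sub>x\<^sub>y\<close> turns the
  expectation of this identity into \<open>(\<Delta> - z) E R - \<lambda>\<^sup>2 E (D[R] R) = Id\<close>. The law of \<open>g\<close> is invariant
  under translations of the torus, hence so is \<open>E R\<close>, and \<open>D[E R] = \<theta> Id\<close>. Splitting
  \<open>D[R] = D[R - E R] + \<theta> Id\<close> gives \<open>(\<Delta> - (z + \<lambda>\<^sup>2 \<theta>)) E R = Id + E\<^sub>l\<^sub>o\<^sub>c\<close>. Finally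
  \<open>Im \<theta> \<ge> 0\<close> by the Ward identity \<open>Im R\<^sub>v\<^sub>v = Im z \<Sum>\<^sub>x |R\<^sub>x\<^sub>v|\<^sup>2\<close>, so the Hermitian \<open>\<Delta>\<close>
  shifted by \<open>z + \<lambda>\<^sup>2 \<theta>\<close> is invertible and \<open>M\<close> can be applied on the left.
\<close>

lemma mat_mult_id_left:
  assumes "finite T" "x \<in> T" "y \<in> T"
  shows "mat_mult T (mat_id T) B x y = B x y"
proof -
  have "mat_mult T (mat_id T) B x y = (\<Sum>w\<in>T. if w = x then B w y else 0)"
    using assms(2,3) unfolding mat_mult_def mat_id_def by (auto intro!: sum.cong)
  then show ?thesis
    using assms by simp
qed

lemma mat_mult_id_right:
  assumes "finite T" "x \<in> T" "y \<in> T"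
  shows "mat_mult T B (mat_id T) x y = B x y"
proof -
  have "mat_mult T B (mat_id T) x y = (\<Sum>w\<in>T. if w = y then B x w else 0)"
    using assms(2,3) unfolding mat_mult_def mat_id_def by (auto intro!: sum.cong)
  then show ?thesis
    using assms by simp
qed

lemma mat_mult_assoc:
  assumes "x \<in> T" "y \<in> T"
  shows "mat_mult T A (mat_mult T B C) x y = mat_mult T (mat_mult T A B) C x y"
proof -
  have "mat_mult T A (mat_mult T B C) x y = (\<Sum>w\<in>T. \<Sum>u\<in>T. A x w * B w u * C u y)"
    using assms by (auto simp: mat_mult_def sum_distrib_left mult.assoc intro!: sum.cong)
  also have "\<dots> = (\<Sum>u\<in>T. \<Sum>w\<in>T. A x w * B w u * C u y)"
    by (rule sum.swap)
  also have "\<dots> = mat_mult T (mat_mult T A B) C x y"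
    using assms by (auto simp: mat_mult_def sum_distrib_right intro!: sum.cong)
  finally show ?thesis .
qed

lemma mat_extensional_mat_mult [simp]: "mat_extensional T (mat_mult T A B)"
  by (simp add: mat_extensional_def mat_mult_def)

lemma mat_extensional_mat_id [simp]: "mat_extensional T (mat_id T)"
  by (simp add: mat_extensional_def mat_id_def)

lemma mat_mult_diff_smult_id:
  assumes "finite T" "x \<in> T" "y \<in> T"
  shows "mat_mult T (\<lambda>u v. A u v - c * mat_id T u v) B x y = mat_mult T A B x y - c * B x y"
proof -
  have "mat_mult T (\<lambda>u v. A u v - c * mat_id T u v) B x y = mat_mult T A B x y - c * mat_mult T (mat_id T) B x y"
    using assms(2,3) by (simp add: mat_mult_def left_diff_distrib sum_subtractf sum_distrib_left mult.assoc)
  then show ?thesis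
    using assms by (simp add: mat_mult_id_left)
qed

lemma mat_inv_unique:
  assumes T: "finite T" and B: "mat_extensional T B" "mat_mult T A B = mat_id T" "mat_mult T B A = mat_id T"
  shows "mat_inv T A = B"
  unfolding mat_inv_def
proof (rule the_equality)
  fix B' assume B': "mat_extensional T B' \<and> mat_mult T A B' = mat_id T \<and> mat_mult T B' A = mat_id T"
  show "B' = B"
  proof (intro ext)
    fix x y
    show "B' x y = B x y"
    proof (cases "x \<in> T \<and> y \<in> T")
      case True
      then have "B' x y = mat_mult T B' (mat_mult T A B) x y"
        using T B by (simp add: mat_mult_id_right)
      also have "\<dots> = mat_mult T (mat_mult T B' A) B x y"
        using True by (simp add: mat_mult_assoc)
      also have "\<dots> = B x y"
        using True T B' by (simp add: mat_mult_id_left)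
      finally show ?thesis .
    next
      case False
      then show ?thesis
        using B B' by (auto simp: mat_extensional_def)
    qed
  qed
qed (use B in auto)

lemma mat_inv_reindex:
  assumes T: "finite T" and p: "bij_betw p T T"
    and A': "\<And>u v. u \<in> T \<Longrightarrow> v \<in> T \<Longrightarrow> A' u v = A (p u) (p v)"
    and AB: "mat_mult T A B = mat_id T" and BA: "mat_mult T B A = mat_id T"
    and u: "u \<in> T" and v: "v \<in> T"
  shows "mat_inv T A' u v = B (p u) (p v)"
proof -
  define B' where "B' = (\<lambda>u v. if u \<in> T \<and> v \<in> T then B (p u) (p v) else 0)"
  have p_in: "p w \<in> T" if "w \<in> T" for w
    using p that by (rule bij_betw_apply)
  have p_eq: "p x = p y \<longleftrightarrow> x = y" if "x \<in> T" "y \<in> T" for x y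
    using p that by (auto simp: bij_betw_def inj_on_eq_iff)
  have reindex: "mat_mult T X' Y' = mat_id T"
    if XY: "mat_mult T X Y = mat_id T"
      and X': "\<And>u v. u \<in> T \<Longrightarrow> v \<in> T \<Longrightarrow> X' u v = X (p u) (p v)"
      and Y': "\<And>u v. u \<in> T \<Longrightarrow> v \<in> T \<Longrightarrow> Y' u v = Y (p u) (p v)"
    for X X' Y Y'
  proof (intro ext)
    fix x y
    show "mat_mult T X' Y' x y = mat_id T x y"
    proof (cases "x \<in> T \<and> y \<in> T")
      case True
      have "mat_mult T X' Y' x y = (\<Sum>w\<in>T. X (p x) (p w) * Y (p w) (p y))"
        using True by (simp add: mat_mult_def X' Y')
      also have "\<dots> = (\<Sum>w\<in>T. X (p x) w * Y w (p y))"
        using p by (rule sum.reindex_bij_betw)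
      also have "\<dots> = mat_mult T X Y (p x) (p y)"
        using True p_in by (simp add: mat_mult_def)
      finally show ?thesis
        using True p_in p_eq by (simp add: XY mat_id_def)
    qed (auto simp: mat_mult_def mat_id_def)
  qed
  have B': "B' u v = B (p u) (p v)" if "u \<in> T" "v \<in> T" for u v
    using that by (simp add: B'_def)
  have "mat_inv T A' = B'"
  proof (rule mat_inv_unique[OF T])
    show "mat_extensional T B'"
      by (simp add: B'_def mat_extensional_def)
    show "mat_mult T A' B' = mat_id T"
      using AB A' B' by (rule reindex)
    show "mat_mult T B' A' = mat_id T"
      using BA B' A' by (rule reindex)
  qed
  then show ?thesis
    using u v by (simp add: B')
qed

lemma mat_mult_left_inverse_solve:
  assumes T: "finite T" and MK: "mat_mult T M K = mat_id T"
    and KX: "\<And>u v. u \<in> T \<Longrightarrow> v \<in> T \<Longrightarrow> mat_mult T K X u v = Y u v"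
    and x: "x \<in> T" and y: "y \<in> T"
  shows "X x y = mat_mult T M Y x y"
proof -
  have "mat_mult T M Y x y = mat_mult T M (mat_mult T K X) x y"
    using x y KX by (auto simp: mat_mult_def intro!: sum.cong)
  also have "\<dots> = mat_mult T (mat_mult T M K) X x y"
    using x y by (rule mat_mult_assoc)
  also have "\<dots> = X x y"
    unfolding MK using T x y by (rule mat_mult_id_left)
  finally show ?thesis by simp
qed

lemma inverse_diff_diagonal_perturbation:
  assumes T: "finite T" and B': "mat_mult T B' A' = mat_id T" and C: "mat_mult T A C = mat_id T"
    and u: "u \<in> T" and v: "v \<in> T" and x: "x \<in> T"
    and AA': "\<And>a b. a \<in> T \<Longrightarrow> b \<in> T \<Longrightarrow> A a b - A' a b = (if a = x \<and> b = x then \<delta> else 0)"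
  shows "B' u v - C u v = B' u x * \<delta> * C x v"
proof -
  have "B' u v - C u v = mat_mult T B' (mat_mult T A C) u v - mat_mult T (mat_mult T B' A') C u v"
    using T u v B' C by (simp add: mat_mult_id_left mat_mult_id_right)
  also have "\<dots> = (\<Sum>w\<in>T. B' u w * (\<Sum>w'\<in>T. (A w w' - A' w w') * C w' v))"
    using u v by (simp add: mat_mult_assoc[symmetric])
      (auto simp: mat_mult_def sum_subtractf[symmetric] algebra_simps sum_distrib_left intro!: sum.cong)
  also have "\<dots> = (\<Sum>w\<in>T. if w = x then B' u x * \<delta> * C x v else 0)"
  proof (rule sum.cong[OF refl])
    fix w assume w: "w \<in> T"
    have "(\<Sum>w'\<in>T. (A w w' - A' w w') * C w' v) = (\<Sum>w'\<in>T. if w' = x then (if w = x then \<delta> else 0) * C x v else 0)"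
      using w by (intro sum.cong) (auto simp: AA')
    then show "B' u w * (\<Sum>w'\<in>T. (A w w' - A' w w') * C w' v) = (if w = x then B' u x * \<delta> * C x v else 0)"
      using T x by simp
  qed
  also have "\<dots> = B' u x * \<delta> * C x v"
    using T x by simp
  finally show ?thesis .
qed

section \<open>Existence and measurability of inverses\<close>

text \<open>Matrices indexed by a finite set \<open>T\<close> are transported to \<open>card T \<times> card T\<close> matrices
  through a fixed enumeration of \<open>T\<close>, so that the adjugate formula for the inverse is available.\<close>

definition set_enum :: "'a set \<Rightarrow> nat \<Rightarrow> 'a" where
  "set_enum T = (SOME e. bij_betw e {0..<card T} T)"

definition set_index :: "'a set \<Rightarrow> 'a \<Rightarrow> nat" where
  "set_index T = the_inv_into {0..<card T} (set_enum T)"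

definition to_jnf :: "(nat \<Rightarrow> nat) set \<Rightarrow> op \<Rightarrow> complex mat" where
  "to_jnf T A = mat (card T) (card T) (\<lambda>(i, j). A (set_enum T i) (set_enum T j))"

definition from_jnf :: "(nat \<Rightarrow> nat) set \<Rightarrow> complex mat \<Rightarrow> op" where
  "from_jnf T N = (\<lambda>x y. if x \<in> T \<and> y \<in> T then N $$ (set_index T x, set_index T y) else 0)"

definition trivial_kernel :: "(nat \<Rightarrow> nat) set \<Rightarrow> op \<Rightarrow> bool" where
  "trivial_kernel T A \<longleftrightarrow> (\<forall>v. (\<forall>x\<in>T. (\<Sum>w\<in>T. A x w * v w) = 0) \<longrightarrow> (\<forall>w\<in>T. v w = 0))"

lemma bij_betw_set_enum: "finite T \<Longrightarrow> bij_betw (set_enum T) {0..<card T} T"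
  unfolding set_enum_def using ex_bij_betw_nat_finite[of T] by (metis someI_ex)

lemma set_enum_in: "finite T \<Longrightarrow> i < card T \<Longrightarrow> set_enum T i \<in> T"
  using bij_betw_set_enum[of T] by (auto dest: bij_betw_apply)

lemma set_enum_eq_iff:
  "finite T \<Longrightarrow> i < card T \<Longrightarrow> j < card T \<Longrightarrow> set_enum T i = set_enum T j \<longleftrightarrow> i = j"
  using bij_betw_set_enum[of T] by (auto simp: bij_betw_def inj_on_eq_iff)

lemma set_index_less: "finite T \<Longrightarrow> x \<in> T \<Longrightarrow> set_index T x < card T"
  using bij_betw_set_enum[of T] unfolding set_index_def
  by (metis atLeastLessThan_iff bij_betw_def the_inv_into_into order_refl)

lemma set_enum_index: "finite T \<Longrightarrow> x \<in> T \<Longrightarrow> set_enum T (set_index T x) = x"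
  using bij_betw_set_enum[of T] unfolding set_index_def by (simp add: f_the_inv_into_f_bij_betw)

lemma set_index_enum: "finite T \<Longrightarrow> i < card T \<Longrightarrow> set_index T (set_enum T i) = i"
  using bij_betw_set_enum[of T] unfolding set_index_def by (simp add: bij_betw_def the_inv_into_f_f)

lemma sum_set_enum: "finite T \<Longrightarrow> (\<Sum>w\<in>T. f w) = (\<Sum>k\<in>{0..<card T}. f (set_enum T k))"
  using sum.reindex_bij_betw[OF bij_betw_set_enum[of T], of f] by simp

lemma to_jnf_carrier [simp]: "to_jnf T A \<in> carrier_mat (card T) (card T)"
  by (simp add: to_jnf_def)

lemma dim_to_jnf [simp]: "dim_row (to_jnf T A) = card T" "dim_col (to_jnf T A) = card T"
  by (simp_all add: to_jnf_def)

lemma index_to_jnf [simp]: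
  "i < card T \<Longrightarrow> j < card T \<Longrightarrow> to_jnf T A $$ (i, j) = A (set_enum T i) (set_enum T j)"
  by (simp add: to_jnf_def)

lemma to_jnf_mat_mult:
  assumes T: "finite T"
  shows "to_jnf T (mat_mult T A B) = to_jnf T A * to_jnf T B"
proof (rule eq_matI)
  fix i j assume "i < dim_row (to_jnf T A * to_jnf T B)" "j < dim_col (to_jnf T A * to_jnf T B)"
  then have i: "i < card T" and j: "j < card T"
    by auto
  have "to_jnf T (mat_mult T A B) $$ (i, j) = (\<Sum>w\<in>T. A (set_enum T i) w * B w (set_enum T j))"
    using i j T by (simp add: mat_mult_def set_enum_in)
  also have "\<dots> = (\<Sum>k\<in>{0..<card T}. A (set_enum T i) (set_enum T k) * B (set_enum T k) (set_enum T j))"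
    using T by (rule sum_set_enum)
  also have "\<dots> = (to_jnf T A * to_jnf T B) $$ (i, j)"
    using i j by (simp add: scalar_prod_def)
  finally show "to_jnf T (mat_mult T A B) $$ (i, j) = (to_jnf T A * to_jnf T B) $$ (i, j)" .
qed auto

lemma to_jnf_mat_id: "finite T \<Longrightarrow> to_jnf T (mat_id T) = 1\<^sub>m (card T)"
  by (rule eq_matI) (auto simp: mat_id_def set_enum_in set_enum_eq_iff)

lemma to_jnf_from_jnf:
  "finite T \<Longrightarrow> N \<in> carrier_mat (card T) (card T) \<Longrightarrow> to_jnf T (from_jnf T N) = N"
  by (rule eq_matI) (auto simp: from_jnf_def set_enum_in set_index_enum)

lemma to_jnf_inject:
  assumes T: "finite T" and "mat_extensional T A" "mat_extensional T B" "to_jnf T A = to_jnf T B"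
  shows "A = B"
proof (intro ext)
  fix x y
  show "A x y = B x y"
  proof (cases "x \<in> T \<and> y \<in> T")
    case True
    then have "A x y = to_jnf T A $$ (set_index T x, set_index T y)"
      "B x y = to_jnf T B $$ (set_index T x, set_index T y)"
      using T by (simp_all add: set_index_less set_enum_index)
    then show ?thesis
      using assms(4) by simp
  qed (use assms(2,3) in \<open>auto simp: mat_extensional_def\<close>)
qed

lemma from_jnf_inverse:
  assumes T: "finite T" and N: "N \<in> carrier_mat (card T) (card T)"
    and AN: "to_jnf T A * N = 1\<^sub>m (card T)" and NA: "N * to_jnf T A = 1\<^sub>m (card T)"
  shows "mat_mult T A (from_jnf T N) = mat_id T" "mat_mult T (from_jnf T N) A = mat_id T"
  using AN NA by (auto intro!: to_jnf_inject[OF T]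
      simp: to_jnf_mat_mult to_jnf_from_jnf to_jnf_mat_id T N)

lemma det_to_jnf_nonzero:
  assumes T: "finite T" and ker: "trivial_kernel T A"
  shows "det (to_jnf T A) \<noteq> 0"
proof
  let ?n = "card T"
  assume "det (to_jnf T A) = 0"
  then obtain v where v: "v \<in> carrier_vec ?n" "v \<noteq> 0\<^sub>v ?n" "to_jnf T A *\<^sub>v v = 0\<^sub>v ?n"
    using det_0_iff_vec_prod_zero[OF to_jnf_carrier] by blast
  define u where "u w = v $ set_index T w" for w
  have "(\<Sum>w\<in>T. A x w * u w) = 0" if x: "x \<in> T" for x
  proof -
    have i: "set_index T x < ?n"
      using T x by (rule set_index_less)
    have "(\<Sum>w\<in>T. A x w * u w) = (\<Sum>k\<in>{0..<?n}. A x (set_enum T k) * v $ k)"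
      by (simp add: sum_set_enum[OF T] u_def set_index_enum T)
    also have "\<dots> = (to_jnf T A *\<^sub>v v) $ set_index T x"
      using v(1) i T x by (simp add: set_enum_index scalar_prod_def)
    also have "\<dots> = 0"
      using v(3) i by simp
    finally show ?thesis .
  qed
  then have "\<forall>w\<in>T. u w = 0"
    using ker unfolding trivial_kernel_def by blast
  then have "v $ k = 0" if "k < ?n" for k
    using that T set_enum_in[OF T that] by (metis u_def set_index_enum)
  then have "v = 0\<^sub>v ?n"
    using v(1) by (intro eq_vecI) auto
  with v(2) show False ..
qed

lemma adj_mat_inverse:
  fixes A :: "'a::field mat"
  assumes A: "A \<in> carrier_mat n n" and D: "det A \<noteq> 0"
  shows "(1 / det A) \<cdot>\<^sub>m adj_mat A \<in> carrier_mat n n"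
    "A * ((1 / det A) \<cdot>\<^sub>m adj_mat A) = 1\<^sub>m n" "((1 / det A) \<cdot>\<^sub>m adj_mat A) * A = 1\<^sub>m n"
proof -
  note adj = adj_mat[OF A]
  show "(1 / det A) \<cdot>\<^sub>m adj_mat A \<in> carrier_mat n n"
    using adj by simp
  have "A * ((1 / det A) \<cdot>\<^sub>m adj_mat A) = (1 / det A) \<cdot>\<^sub>m (det A \<cdot>\<^sub>m 1\<^sub>m n)"
    by (simp add: mult_smult_distrib[OF A adj(1)] adj(2))
  then show "A * ((1 / det A) \<cdot>\<^sub>m adj_mat A) = 1\<^sub>m n"
    using D by (auto intro!: eq_matI)
  have "((1 / det A) \<cdot>\<^sub>m adj_mat A) * A = (1 / det A) \<cdot>\<^sub>m (det A \<cdot>\<^sub>m 1\<^sub>m n)"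
    by (simp add: mult_smult_assoc_mat[OF adj(1) A] adj(3))
  then show "((1 / det A) \<cdot>\<^sub>m adj_mat A) * A = 1\<^sub>m n"
    using D by (auto intro!: eq_matI)
qed

lemma mat_inv_adjugate:
  assumes T: "finite T" and ker: "trivial_kernel T A"
  shows "mat_inv T A = from_jnf T ((1 / det (to_jnf T A)) \<cdot>\<^sub>m adj_mat (to_jnf T A))"
  using from_jnf_inverse[OF T adj_mat_inverse[OF to_jnf_carrier det_to_jnf_nonzero[OF T ker]]]
  by (intro mat_inv_unique[OF T]) (auto simp: mat_extensional_def from_jnf_def)

lemma mat_inv_inverse:
  assumes T: "finite T" and ker: "trivial_kernel T A"
  shows "mat_extensional T (mat_inv T A)" "mat_mult T A (mat_inv T A) = mat_id T"
    "mat_mult T (mat_inv T A) A = mat_id T"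
  using from_jnf_inverse[OF T adj_mat_inverse[OF to_jnf_carrier det_to_jnf_nonzero[OF T ker]]]
  by (auto simp: mat_inv_adjugate[OF T ker] mat_extensional_def from_jnf_def)

lemma measurable_det:
  fixes G :: "'a \<Rightarrow> complex mat"
  assumes G: "\<And>g. G g \<in> carrier_mat n n"
    and m: "\<And>i j. i < n \<Longrightarrow> j < n \<Longrightarrow> (\<lambda>g. G g $$ (i, j)) \<in> borel_measurable M"
  shows "(\<lambda>g. det (G g)) \<in> borel_measurable M"
proof -
  have "(\<lambda>g. det (G g)) =
     (\<lambda>g. \<Sum>p\<in>{p. p permutes {0..<n}}. signof p * (\<Prod>i = 0..<n. G g $$ (i, p i)))"
    using det_def'[OF G] by auto
  moreover have "(\<lambda>g. G g $$ (i, p i)) \<in> borel_measurable M" if "p permutes {0..<n}" "i < n" for p i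
    using that m permutes_in_image[of p "{0..<n}" i] by auto
  ultimately show ?thesis
    by (auto intro!: borel_measurable_sum borel_measurable_times borel_measurable_prod)
qed

lemma measurable_adj_mat_entry:
  fixes G :: "'a \<Rightarrow> complex mat"
  assumes G: "\<And>g. G g \<in> carrier_mat n n"
    and m: "\<And>i j. i < n \<Longrightarrow> j < n \<Longrightarrow> (\<lambda>g. G g $$ (i, j)) \<in> borel_measurable M"
    and i: "i < n" and j: "j < n"
  shows "(\<lambda>g. adj_mat (G g) $$ (i, j)) \<in> borel_measurable M"
proof -
  have "(\<lambda>g. adj_mat (G g) $$ (i, j)) = (\<lambda>g. (-1) ^ (j + i) * det (mat_delete (G g) j i))"
    using i j by (auto simp: adj_mat_def cofactor_def carrier_matD[OF G])
  moreover have "(\<lambda>g. det (mat_delete (G g) j i)) \<in> borel_measurable M"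
  proof (rule measurable_det)
    show "mat_delete (G g) j i \<in> carrier_mat (n - 1) (n - 1)" for g
      using mat_delete_carrier[OF G] by blast
    fix a b assume "a < n - 1" "b < n - 1"
    then have "(if a < j then a else Suc a) < n" "(if b < i then b else Suc b) < n"
      by auto
    then show "(\<lambda>g. mat_delete (G g) j i $$ (a, b)) \<in> borel_measurable M"
      using \<open>a < n - 1\<close> \<open>b < n - 1\<close> m by (simp add: mat_delete_def carrier_matD[OF G])
  qed
  ultimately show ?thesis
    by simp
qed

lemma measurable_mat_inv:
  assumes T: "finite T" and ker: "\<And>g. trivial_kernel T (A g)"
    and m: "\<And>u v. u \<in> T \<Longrightarrow> v \<in> T \<Longrightarrow> (\<lambda>g. A g u v) \<in> borel_measurable M"
  shows "(\<lambda>g. mat_inv T (A g) x y) \<in> borel_measurable M"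
proof (cases "x \<in> T \<and> y \<in> T")
  case True
  let ?G = "\<lambda>g. to_jnf T (A g)" and ?i = "set_index T x" and ?j = "set_index T y"
  have entries: "(\<lambda>g. ?G g $$ (i, j)) \<in> borel_measurable M" if "i < card T" "j < card T" for i j
    using that m T by (simp add: set_enum_in)
  have "(\<lambda>g. mat_inv T (A g) x y) = (\<lambda>g. adj_mat (?G g) $$ (?i, ?j) / det (?G g))"
    using True T by (auto simp: mat_inv_adjugate[OF T ker] from_jnf_def set_index_less
        carrier_matD[OF adj_mat(1)[OF to_jnf_carrier]])
  then show ?thesis
    using True T by (auto intro!: borel_measurable_times borel_measurable_divide measurable_det
        measurable_adj_mat_entry entries set_index_less)
next
  case False
  then have "(\<lambda>g. mat_inv T (A g) x y) = (\<lambda>g. 0)"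
    using mat_inv_inverse(1)[OF T ker] by (auto simp: mat_extensional_def)
  then show ?thesis
    by simp
qed

section \<open>Hermitian matrices\<close>

definition mat_hermitian :: "(nat \<Rightarrow> nat) set \<Rightarrow> op \<Rightarrow> bool" where
  "mat_hermitian T H \<longleftrightarrow> (\<forall>x\<in>T. \<forall>y\<in>T. cnj (H x y) = H y x)"

lemma Im_quadratic_form_hermitian_shift:
  assumes T: "finite T" and H: "mat_hermitian T H"
  shows "Im (\<Sum>x\<in>T. cnj (v x) * (\<Sum>y\<in>T. (H x y - w * mat_id T x y) * v y))
         = - Im w * (\<Sum>x\<in>T. (cmod (v x))\<^sup>2)"
proof -
  let ?Q = "\<Sum>x\<in>T. \<Sum>y\<in>T. cnj (v x) * H x y * v y"
  have "cnj ?Q = (\<Sum>y\<in>T. \<Sum>x\<in>T. v x * H y x * cnj (v y))"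
    using H unfolding mat_hermitian_def by (subst sum.swap) (auto simp: cnj_sum intro!: sum.cong)
  also have "\<dots> = ?Q"
    by (auto intro!: sum.cong simp: mult_ac)
  finally have Q: "Im ?Q = 0"
    by (simp only: complex_is_Real_iff[symmetric] Reals_cnj_iff)
  have row: "(\<Sum>y\<in>T. (H x y - w * mat_id T x y) * v y) = (\<Sum>y\<in>T. H x y * v y) - w * v x"
    if "x \<in> T" for x
  proof -
    have "(\<Sum>y\<in>T. w * mat_id T x y * v y) = (\<Sum>y\<in>T. if y = x then w * v y else 0)"
      using that by (intro sum.cong) (auto simp: mat_id_def)
    then show ?thesis
      using T that by (simp add: algebra_simps sum_subtractf)
  qed
  have "(\<Sum>x\<in>T. cnj (v x) * (\<Sum>y\<in>T. (H x y - w * mat_id T x y) * v y))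
      = (\<Sum>x\<in>T. cnj (v x) * (\<Sum>y\<in>T. H x y * v y) - w * (cnj (v x) * v x))"
    by (rule sum.cong[OF refl], subst row, assumption, simp add: algebra_simps)
  also have "\<dots> = ?Q - w * (\<Sum>x\<in>T. cnj (v x) * v x)"
    by (simp add: sum_subtractf sum_distrib_left mult.assoc)
  also have "(\<Sum>x\<in>T. cnj (v x) * v x) = complex_of_real (\<Sum>x\<in>T. (cmod (v x))\<^sup>2)"
    unfolding of_real_sum complex_norm_square by (rule sum.cong) (simp_all add: mult.commute)
  finally have quad: "(\<Sum>x\<in>T. cnj (v x) * (\<Sum>y\<in>T. (H x y - w * mat_id T x y) * v y))
      = ?Q - w * complex_of_real (\<Sum>x\<in>T. (cmod (v x))\<^sup>2)" .
  have Im_diff: "Im (q - w * complex_of_real r) = Im q - Im w * r" for q r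
    by simp
  show ?thesis
    unfolding quad Im_diff Q by simp
qed

lemma hermitian_shift_trivial_kernel:
  assumes T: "finite T" and H: "mat_hermitian T H" and w: "Im w \<noteq> 0"
  shows "trivial_kernel T (\<lambda>x y. H x y - w * mat_id T x y)"
  unfolding trivial_kernel_def
proof (intro allI impI)
  fix v assume "\<forall>x\<in>T. (\<Sum>y\<in>T. (H x y - w * mat_id T x y) * v y) = 0"
  then have "Im w * (\<Sum>x\<in>T. (cmod (v x))\<^sup>2) = 0"
    using Im_quadratic_form_hermitian_shift[OF T H, of v w] by simp
  then have "(\<Sum>x\<in>T. (cmod (v x))\<^sup>2) = 0"
    using w by simp
  then show "\<forall>w\<in>T. v w = 0"
    using T by (simp add: sum_nonneg_eq_0_iff)
qed

lemma hermitian_resolvent_ward_identity: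
  assumes T: "finite T" and H: "mat_hermitian T H"
    and B: "mat_mult T (\<lambda>x y. H x y - w * mat_id T x y) B = mat_id T" and v: "v \<in> T"
  shows "Im (B v v) = Im w * (\<Sum>x\<in>T. (cmod (B x v))\<^sup>2)"
proof -
  have col: "(\<Sum>y\<in>T. (H x y - w * mat_id T x y) * B y v) = (if x = v then 1 else 0)"
    if "x \<in> T" for x
    using fun_cong[OF fun_cong[OF B, of x], of v] that v by (simp add: mat_mult_def mat_id_def)
  have "(\<Sum>x\<in>T. cnj (B x v) * (\<Sum>y\<in>T. (H x y - w * mat_id T x y) * B y v))
        = (\<Sum>x\<in>T. if x = v then cnj (B x v) else 0)"
    by (intro sum.cong) (auto simp: col)
  then have "Im (cnj (B v v)) = - Im w * (\<Sum>x\<in>T. (cmod (B x v))\<^sup>2)"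
    using Im_quadratic_form_hermitian_shift[OF T H, of "\<lambda>x. B x v" w] T v by simp
  then show ?thesis
    by simp
qed

lemma norm_hermitian_resolvent_le:
  assumes T: "finite T" and H: "mat_hermitian T H" and w: "Im w > 0"
    and B: "mat_mult T (\<lambda>x y. H x y - w * mat_id T x y) B = mat_id T"
    and u: "u \<in> T" and v: "v \<in> T"
  shows "cmod (B u v) \<le> 1 / Im w"
proof -
  define s where "s = sqrt (\<Sum>x\<in>T. (cmod (B x v))\<^sup>2)"
  have s0: "s \<ge> 0"
    unfolding s_def by (simp add: sum_nonneg)
  have entry_le: "cmod (B x v) \<le> s" if "x \<in> T" for x
    unfolding s_def using T that by (intro real_le_rsqrt member_le_sum) auto
  have "Im w * s\<^sup>2 = Im (B v v)"
    unfolding s_def using hermitian_resolvent_ward_identity[OF T H B v] by (simp add: sum_nonneg)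
  also have "\<dots> \<le> s"
    using entry_le[OF v] abs_Im_le_cmod[of "B v v"] by linarith
  finally have "Im w * s\<^sup>2 \<le> s" .
  then have "s \<le> 1 / Im w"
    using w s0 by (cases "s = 0") (auto simp: field_simps power2_eq_square)
  then show ?thesis
    using entry_le[OF u] by linarith
qed

lemma Im_hermitian_resolvent_diag_nonneg:
  assumes "finite T" "mat_hermitian T H" "Im w > 0"
    and "mat_mult T (\<lambda>x y. H x y - w * mat_id T x y) B = mat_id T" and "v \<in> T"
  shows "Im (B v v) \<ge> 0"
  using hermitian_resolvent_ward_identity[OF assms(1,2,4,5)] assms(3) by (simp add: sum_nonneg)

lemma finite_torus: "finite (torus d L)"
proof -
  have "torus d L = {f. \<forall>i. (i \<in> {..<d} \<longrightarrow> f i \<in> {..<L}) \<and> (i \<notin> {..<d} \<longrightarrow> f i = 0)}"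
    unfolding torus_def by (intro Collect_cong) (auto simp: not_less)
  moreover have "finite \<dots>"
    by (rule finite_set_of_finite_funs) auto
  ultimately show ?thesis
    by simp
qed

lemma origin_in_torus: "L \<ge> 1 \<Longrightarrow> origin \<in> torus d L"
  by (auto simp: torus_def origin_def)

lemma step_plus_in_torus: "u \<in> torus d L \<Longrightarrow> i < d \<Longrightarrow> step_plus L i u \<in> torus d L"
  by (auto simp: torus_def step_plus_def)

lemma step_minus_in_torus: "u \<in> torus d L \<Longrightarrow> i < d \<Longrightarrow> step_minus L i u \<in> torus d L"
  by (auto simp: torus_def step_minus_def)

lemma mod_succ_pred:
  assumes "a < (L::nat)"
  shows "((a + 1) mod L + L - 1) mod L = a"
proof (cases "a + 1 < L")
  case False
  then have "L = a + 1"
    using assms by simp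
  then show ?thesis
    by simp
qed (use assms in simp)

lemma mod_pred_succ:
  assumes "b < (L::nat)"
  shows "((b + L - 1) mod L + 1) mod L = b"
proof (cases b)
  case 0
  then show ?thesis
    using assms by (simp add: Suc_diff_Suc mod_Suc_eq)
qed (use assms in simp)

lemma step_plus_eq_iff:
  assumes x: "x \<in> torus d L" and y: "y \<in> torus d L" and i: "i < d"
  shows "y = step_plus L i x \<longleftrightarrow> x = step_minus L i y"
proof -
  have xi: "x i < L" and yi: "y i < L"
    using x y i by (auto simp: torus_def)
  have "y i = (x i + 1) mod L \<longleftrightarrow> x i = (y i + L - 1) mod L"
    by (metis mod_succ_pred[OF xi] mod_pred_succ[OF yi])
  moreover have "y = step_plus L i x \<longleftrightarrow> y i = (x i + 1) mod L \<and> (\<forall>j. j \<noteq> i \<longrightarrow> y j = x j)"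
    by (auto simp: step_plus_def fun_eq_iff)
  moreover have "x = step_minus L i y \<longleftrightarrow> x i = (y i + L - 1) mod L \<and> (\<forall>j. j \<noteq> i \<longrightarrow> x j = y j)"
    by (auto simp: step_minus_def fun_eq_iff)
  ultimately show ?thesis
    by metis
qed

lemma cnj_laplacian: "cnj (laplacian d L x y) = laplacian d L x y"
proof -
  have "cnj (of_bool b :: complex) = of_bool b" for b
    by (cases b) simp_all
  then show ?thesis
    by (simp add: laplacian_def cnj_sum)
qed

lemma laplacian_commute: "laplacian d L x y = laplacian d L y x"
proof (cases "x \<in> torus d L \<and> y \<in> torus d L")
  case True
  then have "(y = step_plus L i x) = (x = step_minus L i y)" "(y = step_minus L i x) = (x = step_plus L i y)"
    if "i < d" for i
    using that step_plus_eq_iff by blast+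
  then have "(\<Sum>i<d. of_bool (y = step_plus L i x) + of_bool (y = step_minus L i x) :: complex)
      = (\<Sum>i<d. of_bool (x = step_plus L i y) + of_bool (x = step_minus L i y))"
    by (intro sum.cong) (simp_all add: add.commute)
  then show ?thesis
    using True by (simp add: laplacian_def eq_commute[of x y])
qed (auto simp: laplacian_def)

lemma mat_hermitian_laplacian: "mat_hermitian (torus d L) (laplacian d L)"
  unfolding mat_hermitian_def by (metis cnj_laplacian laplacian_commute)

lemma mat_hermitian_hamiltonian: "mat_hermitian (torus d L) (hamiltonian d L lam g)"
  unfolding mat_hermitian_def hamiltonian_def using cnj_laplacian laplacian_commute by auto

definition torus_shift :: "nat \<Rightarrow> (nat \<Rightarrow> nat) \<Rightarrow> (nat \<Rightarrow> nat) \<Rightarrow> (nat \<Rightarrow> nat)" where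
  "torus_shift L a u = (\<lambda>i. (u i + a i) mod L)"

lemma torus_shift_in_torus:
  "L \<ge> 1 \<Longrightarrow> u \<in> torus d L \<Longrightarrow> a \<in> torus d L \<Longrightarrow> torus_shift L a u \<in> torus d L"
  by (auto simp: torus_def torus_shift_def)

lemma bij_betw_torus_shift:
  assumes L: "L \<ge> 1" and a: "a \<in> torus d L"
  shows "bij_betw (torus_shift L a) (torus d L) (torus d L)"
proof (rule bij_betwI[where g = "\<lambda>u i. (u i + (L - a i)) mod L"])
  have a_le: "a i \<le> L" for i
    using a by (cases "i < d") (auto simp: torus_def)
  have cancel: "((u i + a i) mod L + (L - a i)) mod L = u i" "((u i + (L - a i)) mod L + a i) mod L = u i"
    if "u \<in> torus d L" for u i
  proof -
    have "u i mod L = u i"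
      using that by (cases "i < d") (auto simp: torus_def)
    moreover have "u i + a i + (L - a i) = u i + L" "u i + (L - a i) + a i = u i + L"
      using a_le[of i] by simp_all
    ultimately show "((u i + a i) mod L + (L - a i)) mod L = u i" "((u i + (L - a i)) mod L + a i) mod L = u i"
      by (metis mod_add_left_eq mod_add_self2)+
  qed
  show "(\<lambda>u i. (u i + (L - a i)) mod L) \<in> torus d L \<rightarrow> torus d L"
    using a L by (auto simp: torus_def)
  show "(\<lambda>i. (torus_shift L a u i + (L - a i)) mod L) = u" if "u \<in> torus d L" for u
    by (rule ext) (simp only: torus_shift_def cancel[OF that])
  show "torus_shift L a (\<lambda>i. (u i + (L - a i)) mod L) = u" if "u \<in> torus d L" for u
    by (rule ext) (simp only: torus_shift_def cancel[OF that])
qed (use torus_shift_in_torus[OF L _ a] in blast)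

lemma torus_shift_eq_iff:
  assumes "L \<ge> 1" "a \<in> torus d L" "p \<in> torus d L" "q \<in> torus d L"
  shows "torus_shift L a p = torus_shift L a q \<longleftrightarrow> p = q"
  using bij_betw_torus_shift[OF assms(1,2)] assms(3,4) by (auto simp: bij_betw_def inj_on_eq_iff)

lemma torus_shift_origin:
  assumes "a \<in> torus d L"
  shows "torus_shift L a origin = a"
proof -
  have "a i mod L = a i" for i
    using assms by (cases "i < d") (auto simp: torus_def)
  then show ?thesis
    by (simp add: torus_shift_def origin_def)
qed

lemma torus_shift_step_plus: "torus_shift L a (step_plus L i u) = step_plus L i (torus_shift L a u)"
  by (simp add: torus_shift_def step_plus_def fun_eq_iff mod_add_left_eq mod_Suc_eq)

lemma torus_shift_step_minus:
  assumes "L \<ge> 1"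
  shows "torus_shift L a (step_minus L i u) = step_minus L i (torus_shift L a u)"
proof -
  obtain m where "L = Suc m"
    using assms by (cases L) auto
  then show ?thesis
    by (simp add: torus_shift_def step_minus_def fun_eq_iff mod_add_right_eq mod_add_left_eq add_ac)
qed

lemma laplacian_torus_shift:
  assumes L: "L \<ge> 1" and a: "a \<in> torus d L" and u: "u \<in> torus d L" and v: "v \<in> torus d L"
  shows "laplacian d L (torus_shift L a u) (torus_shift L a v) = laplacian d L u v"
proof -
  note inj = torus_shift_eq_iff[OF L a]
  have "torus_shift L a v = step_plus L i (torus_shift L a u) \<longleftrightarrow> v = step_plus L i u"
    "torus_shift L a v = step_minus L i (torus_shift L a u) \<longleftrightarrow> v = step_minus L i u" if "i < d" for i
    using inj[OF v step_plus_in_torus[OF u that]] inj[OF v step_minus_in_torus[OF u that]]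
    by (simp_all add: torus_shift_step_plus torus_shift_step_minus[OF L])
  then have "(\<Sum>i<d. of_bool (torus_shift L a v = step_plus L i (torus_shift L a u))
        + of_bool (torus_shift L a v = step_minus L i (torus_shift L a u)) :: complex)
      = (\<Sum>i<d. of_bool (v = step_plus L i u) + of_bool (v = step_minus L i u))"
    by (intro sum.cong) simp_all
  then show ?thesis
    using u v inj[OF u v] torus_shift_in_torus[OF L _ a] by (simp add: laplacian_def)
qed

section \<open>The Gaussian field\<close>

lemma std_normal_density_eq: "std_normal_density = (\<lambda>t. exp (- t\<^sup>2 / 2) / sqrt (2 * pi))"
  by (simp add: std_normal_density_def fun_eq_iff)

lemma std_normal_density_has_real_derivative:
  "(std_normal_density has_real_derivative (- t * std_normal_density t)) (at t)"
  unfolding std_normal_density_eq by (auto intro!: derivative_eq_intros simp: field_simps power2_eq_square)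

lemma isCont_std_normal_density: "isCont std_normal_density t"
  by (rule DERIV_isCont[OF std_normal_density_has_real_derivative])

lemma integrable_std_normal_moment_scaleR:
  fixes f :: "real \<Rightarrow> 'a::{banach, second_countable_topology}"
  assumes mf: "f \<in> borel_measurable borel" and bf: "\<And>t. norm (f t) \<le> C"
  shows "integrable lborel (\<lambda>t. (std_normal_density t * t ^ k) *\<^sub>R f t)"
proof (rule Bochner_Integration.integrable_bound[where f = "\<lambda>t. C * (std_normal_density t * \<bar>t\<bar> ^ k)"])
  note mf[measurable]
  show "integrable lborel (\<lambda>t. C * (std_normal_density t * \<bar>t\<bar> ^ k))"
    using integrable_std_normal_moment_abs[of k] by simp
  show "(\<lambda>t. (std_normal_density t * t ^ k) *\<^sub>R f t) \<in> borel_measurable lborel"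
    by measurable
  show "AE t in lborel. norm ((std_normal_density t * t ^ k) *\<^sub>R f t)
      \<le> norm (C * (std_normal_density t * \<bar>t\<bar> ^ k))"
  proof (rule AE_I2)
    fix t
    have "C \<ge> 0"
      using bf[of t] norm_ge_zero order_trans by blast
    then show "norm ((std_normal_density t * t ^ k) *\<^sub>R f t) \<le> norm (C * (std_normal_density t * \<bar>t\<bar> ^ k))"
      using mult_left_mono[OF bf[of t], of "std_normal_density t * \<bar>t\<bar> ^ k"]
      by (simp add: abs_mult power_abs mult_ac)
  qed
qed

lemma tendsto_std_normal_density_scaleR_bounded:
  fixes f :: "real \<Rightarrow> 'a::real_normed_vector"
  assumes bf: "\<And>t. norm (f t) \<le> C"
  shows "((\<lambda>t. std_normal_density t *\<^sub>R f t) \<longlongrightarrow> 0) at_top"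
    "((\<lambda>t. std_normal_density t *\<^sub>R f t) \<longlongrightarrow> 0) at_bot"
proof -
  have "((\<lambda>t. std_normal_density t *\<^sub>R f t) \<longlongrightarrow> 0) F" if "(std_normal_density \<longlongrightarrow> 0) F" for F
  proof (rule Lim_null_comparison)
    show "\<forall>\<^sub>F t in F. norm (std_normal_density t *\<^sub>R f t) \<le> C * std_normal_density t"
    proof (intro always_eventually allI)
      fix t
      show "norm (std_normal_density t *\<^sub>R f t) \<le> C * std_normal_density t"
        using mult_left_mono[OF bf[of t], of "std_normal_density t"] by (simp add: mult.commute)
    qed
    show "((\<lambda>t. C * std_normal_density t) \<longlongrightarrow> 0) F"
      using tendsto_mult_right_zero[OF that] by simp
  qed
  moreover have "(std_normal_density \<longlongrightarrow> 0) at_top" "(std_normal_density \<longlongrightarrow> 0) at_bot"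
    unfolding std_normal_density_eq by real_asymp+
  ultimately show "((\<lambda>t. std_normal_density t *\<^sub>R f t) \<longlongrightarrow> 0) at_top"
    "((\<lambda>t. std_normal_density t *\<^sub>R f t) \<longlongrightarrow> 0) at_bot"
    by blast+
qed

lemma gaussian_integration_by_parts_1d:
  fixes f f' :: "real \<Rightarrow> 'a::euclidean_space"
  assumes df: "\<And>t. (f has_vector_derivative f' t) (at t)" and cf': "\<And>t. isCont f' t"
    and bf: "\<And>t. norm (f t) \<le> C" and bf': "\<And>t. norm (f' t) \<le> C'"
  shows "(\<integral>t. t *\<^sub>R f t \<partial>std_normal_distribution) = (\<integral>t. f' t \<partial>std_normal_distribution)"
proof -
  let ?p = std_normal_density
  have cf: "isCont f t" for t
    using df by (rule has_vector_derivative_continuous)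
  have mf: "f \<in> borel_measurable borel" and mf': "f' \<in> borel_measurable borel"
    using cf cf' by (auto intro!: borel_measurable_continuous_onI continuous_at_imp_continuous_on)
  have int_pf': "integrable lborel (\<lambda>t. ?p t *\<^sub>R f' t)"
    using integrable_std_normal_moment_scaleR[OF mf' bf', of 0] by simp
  have int_tpf: "integrable lborel (\<lambda>t. (?p t * t) *\<^sub>R f t)"
    using integrable_std_normal_moment_scaleR[OF mf bf, of 1] by simp
  define F' where "F' t = ?p t *\<^sub>R f' t - (?p t * t) *\<^sub>R f t" for t
  have "(LBINT t=-\<infinity>..\<infinity>. F' t) = 0 - 0"
  proof (rule interval_integral_FTC_integrable[where F = "\<lambda>t. ?p t *\<^sub>R f t"])
    show "((\<lambda>t. ?p t *\<^sub>R f t) has_vector_derivative F' x) (at x)" for x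
      using has_vector_derivative_scaleR[OF std_normal_density_has_real_derivative df, of x]
      by (simp add: F'_def algebra_simps)
    show "isCont F' x" for x
      unfolding F'_def by (intro continuous_intros isCont_std_normal_density cf cf')
    show "set_integrable lborel (einterval (- \<infinity>) \<infinity>) F'"
      unfolding set_integrable_def einterval_eq_UNIV F'_def using int_pf' int_tpf by simp
    show "(((\<lambda>t. ?p t *\<^sub>R f t) \<circ> real_of_ereal) \<longlongrightarrow> 0) (at_right (- \<infinity>))"
      "(((\<lambda>t. ?p t *\<^sub>R f t) \<circ> real_of_ereal) \<longlongrightarrow> 0) (at_left \<infinity>)"
      unfolding ereal_tendsto_simps1 using tendsto_std_normal_density_scaleR_bounded[OF bf] by simp_all
  qed simp
  then have "(\<integral>t. ?p t *\<^sub>R f' t \<partial>lborel) = (\<integral>t. (?p t * t) *\<^sub>R f t \<partial>lborel)"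
    using Bochner_Integration.integral_diff[OF int_pf' int_tpf]
    by (simp add: F'_def interval_lebesgue_integral_def einterval_eq_UNIV set_lebesgue_integral_def)
  then show ?thesis
    using mf mf' by (simp add: integral_density)
qed

lemma prob_space_std_normal_distribution: "prob_space std_normal_distribution"
  by (rule prob_space_normal_density) simp

lemma prob_space_gauss_field: "prob_space (gauss_field T)"
  unfolding gauss_field_def by (intro prob_space_PiM prob_space_std_normal_distribution)

lemma measurable_gauss_field_component:
  "x \<in> T \<Longrightarrow> (\<lambda>g. g x) \<in> measurable (gauss_field T) std_normal_distribution"
  unfolding gauss_field_def by (rule measurable_component_singleton)

lemma borel_measurable_gauss_field_component:
  assumes "x \<in> T"
  shows "(\<lambda>g. g x) \<in> borel_measurable (gauss_field T)"
proof -
  have "measurable (gauss_field T) std_normal_distribution = borel_measurable (gauss_field T)"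
    by (rule measurable_cong_sets) auto
  then show ?thesis
    using measurable_gauss_field_component[OF assms] by simp
qed

lemma integrable_gauss_field_component_scaleR:
  fixes F :: "((nat \<Rightarrow> nat) \<Rightarrow> real) \<Rightarrow> 'a::{banach, second_countable_topology}"
  assumes x: "x \<in> T" and mF: "F \<in> borel_measurable (gauss_field T)" and bF: "\<And>g. norm (F g) \<le> C"
  shows "integrable (gauss_field T) (\<lambda>g. g x *\<^sub>R F g)"
proof (rule Bochner_Integration.integrable_bound[where f = "\<lambda>g. C * \<bar>g x\<bar>"])
  have "integrable std_normal_distribution (\<lambda>t. \<bar>t\<bar>)"
    using integrable_std_normal_moment_abs[of 1] by (subst integrable_density) auto
  then have "integrable (distr (gauss_field T) std_normal_distribution (\<lambda>g. g x)) (\<lambda>t. \<bar>t\<bar>)"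
    unfolding gauss_field_def using distr_PiM_component[of T "\<lambda>_. std_normal_distribution" x] x prob_space_std_normal_distribution
    by simp
  then show "integrable (gauss_field T) (\<lambda>g. C * \<bar>g x\<bar>)"
    by (subst (asm) integrable_distr_eq[OF measurable_gauss_field_component[OF x]]) auto
  show "(\<lambda>g. g x *\<^sub>R F g) \<in> borel_measurable (gauss_field T)"
    using borel_measurable_gauss_field_component[OF x] mF by (rule borel_measurable_scaleR)
  show "AE g in gauss_field T. norm (g x *\<^sub>R F g) \<le> norm (C * \<bar>g x\<bar>)"
  proof (rule AE_I2)
    fix g :: "(nat \<Rightarrow> nat) \<Rightarrow> real"
    have "C \<ge> 0"
      using bF[of g] norm_ge_zero order_trans by blast
    then show "norm (g x *\<^sub>R F g) \<le> norm (C * \<bar>g x\<bar>)"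
      using mult_left_mono[OF bF[of g], of "\<bar>g x\<bar>"] by (simp add: abs_mult mult.commute)
  qed
qed

lemma gaussian_integration_by_parts:
  fixes F F' :: "((nat \<Rightarrow> nat) \<Rightarrow> real) \<Rightarrow> 'a::euclidean_space"
  assumes T: "finite T" and x: "x \<in> T"
    and mF: "F \<in> borel_measurable (gauss_field T)" and mF': "F' \<in> borel_measurable (gauss_field T)"
    and bF: "\<And>g. norm (F g) \<le> C" and bF': "\<And>g. norm (F' g) \<le> C'"
    and dF: "\<And>h t. ((\<lambda>s. F (h(x := s))) has_vector_derivative F' (h(x := t))) (at t)"
    and cF': "\<And>h t. isCont (\<lambda>s. F' (h(x := s))) t"
  shows "(\<integral>g. g x *\<^sub>R F g \<partial>gauss_field T) = (\<integral>g. F' g \<partial>gauss_field T)"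
proof -
  interpret product_sigma_finite "\<lambda>_. std_normal_distribution"
    by (simp add: product_sigma_finite_def prob_space_imp_sigma_finite[OF prob_space_std_normal_distribution])
  interpret prob_space "gauss_field T"
    by (rule prob_space_gauss_field)
  have T_eq: "gauss_field T = PiM (insert x (T - {x})) (\<lambda>_. std_normal_distribution)"
    using x by (simp add: gauss_field_def insert_absorb)
  have T': "finite (T - {x})" "x \<notin> T - {x}"
    using T by auto
  let ?P = "PiM (T - {x}) (\<lambda>_. std_normal_distribution)"
  have int_gF: "integrable (gauss_field T) (\<lambda>g. g x *\<^sub>R F g)"
    using x mF bF by (rule integrable_gauss_field_component_scaleR)
  have int_F': "integrable (gauss_field T) F'"
    using bF' mF' by (intro integrable_const_bound[where B = C']) auto
  have "(\<integral>g. g x *\<^sub>R F g \<partial>gauss_field T)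
      = (\<integral>h. (\<integral>t. (h(x := t)) x *\<^sub>R F (h(x := t)) \<partial>std_normal_distribution) \<partial>?P)"
    unfolding T_eq by (rule product_integral_insert[OF T']) (use int_gF T_eq in simp)
  also have "\<dots> = (\<integral>h. (\<integral>t. F' (h(x := t)) \<partial>std_normal_distribution) \<partial>?P)"
    using gaussian_integration_by_parts_1d[OF dF cF' bF bF'] by simp
  also have "\<dots> = (\<integral>g. F' g \<partial>gauss_field T)"
    unfolding T_eq by (rule product_integral_insert[OF T', symmetric]) (use int_F' T_eq in simp)
  finally show ?thesis .
qed

definition field_shift ::
    "nat \<Rightarrow> nat \<Rightarrow> (nat \<Rightarrow> nat) \<Rightarrow> ((nat \<Rightarrow> nat) \<Rightarrow> real) \<Rightarrow> ((nat \<Rightarrow> nat) \<Rightarrow> real)" where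
  "field_shift d L a g = (\<lambda>u\<in>torus d L. g (torus_shift L a u))"

lemma measurable_field_shift:
  assumes "L \<ge> 1" "a \<in> torus d L"
  shows "field_shift d L a \<in> measurable (gauss_field (torus d L)) (gauss_field (torus d L))"
  unfolding field_shift_def gauss_field_def
  using assms by (intro measurable_restrict measurable_component_singleton torus_shift_in_torus) auto

lemma distr_gauss_field_shift:
  assumes L: "L \<ge> 1" and a: "a \<in> torus d L"
  shows "distr (gauss_field (torus d L)) (gauss_field (torus d L)) (field_shift d L a) = gauss_field (torus d L)"
proof -
  have "field_shift d L a = (\<lambda>g. \<lambda>u\<in>torus d L. g (torus_shift L a u))"
    by (simp add: fun_eq_iff field_shift_def)
  then show ?thesis
    using distr_PiM_reindex[of "torus d L" "\<lambda>_. std_normal_distribution" "torus_shift L a" "torus d L"]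
      prob_space_std_normal_distribution bij_betw_torus_shift[OF L a]
    by (auto simp: gauss_field_def bij_betw_def torus_shift_in_torus[OF L _ a])
qed

lemma has_vector_derivative_caratheodory:
  fixes f q :: "real \<Rightarrow> 'a::real_normed_vector"
  assumes fq: "\<And>s. f s - f t = (s - t) *\<^sub>R q s" and q: "isCont q t"
  shows "(f has_vector_derivative q t) (at t)"
  unfolding has_vector_derivative_def has_derivative_at
proof
  show "bounded_linear (\<lambda>h. h *\<^sub>R q t)"
    by (rule bounded_linear_scaleR_left)
  have "((\<lambda>h. q (t + h)) \<longlongrightarrow> q t) (at 0)"
    using q unfolding isCont_def by (rule LIM_offset_zero)
  then have "((\<lambda>h. norm (q (t + h) - q t)) \<longlongrightarrow> 0) (at 0)"
    by (intro tendsto_norm_zero) (simp add: Lim_null[symmetric])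
  moreover have "\<forall>\<^sub>F h in at 0. norm (q (t + h) - q t) = norm (f (t + h) - f t - h *\<^sub>R q t) / norm h"
  proof (rule eventually_mono[OF eventually_neq_at_within[of 0 0 UNIV]])
    fix h :: real assume "h \<noteq> 0"
    moreover have "f (t + h) - f t - h *\<^sub>R q t = h *\<^sub>R (q (t + h) - q t)"
      using fq[of "t + h"] by (simp add: algebra_simps)
    ultimately show "norm (q (t + h) - q t) = norm (f (t + h) - f t - h *\<^sub>R q t) / norm h"
      by simp
  qed
  ultimately show "((\<lambda>h. norm (f (t + h) - f t - h *\<^sub>R q t) / norm h) \<longlongrightarrow> 0) (at 0)"
    by (rule Lim_transform_eventually)
qed

locale torus_resolvent =
  fixes d L :: nat and lam :: real and z :: complex
  assumes Im_z_pos: "Im z > 0"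
begin

abbreviation T :: "(nat \<Rightarrow> nat) set" where
  "T \<equiv> torus d L"

abbreviation R :: "((nat \<Rightarrow> nat) \<Rightarrow> real) \<Rightarrow> op" where
  "R g \<equiv> resolvent d L lam g z"

abbreviation ER :: op where
  "ER \<equiv> expect_mat T R"

abbreviation theta :: complex where
  "theta \<equiv> ER origin origin"

lemma trivial_kernel_hamiltonian_shift: "trivial_kernel T (\<lambda>x y. hamiltonian d L lam g x y - z * mat_id T x y)"
  using Im_z_pos by (intro hermitian_shift_trivial_kernel finite_torus mat_hermitian_hamiltonian) simp

lemma resolvent_inverse:
  "mat_extensional T (R g)"
  "mat_mult T (\<lambda>x y. hamiltonian d L lam g x y - z * mat_id T x y) (R g) = mat_id T"
  "mat_mult T (R g) (\<lambda>x y. hamiltonian d L lam g x y - z * mat_id T x y) = mat_id T"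
  unfolding resolvent_def using mat_inv_inverse[OF finite_torus trivial_kernel_hamiltonian_shift] by auto

lemma norm_resolvent_le: "cmod (R g u v) \<le> 1 / Im z"
proof (cases "u \<in> T \<and> v \<in> T")
  case True
  then show ?thesis
    using norm_hermitian_resolvent_le[OF finite_torus mat_hermitian_hamiltonian Im_z_pos resolvent_inverse(2)]
    by blast
next
  case False
  then have "R g u v = 0"
    using resolvent_inverse(1)[of g] by (auto simp: mat_extensional_def)
  then show ?thesis
    using Im_z_pos by simp
qed

lemma norm_resolvent_mult_le: "cmod (R g u v * R g' u' v') \<le> 1 / (Im z)\<^sup>2"
proof -
  have "cmod (R g u v) * cmod (R g' u' v') \<le> (1 / Im z) * (1 / Im z)"
    using Im_z_pos by (intro mult_mono norm_resolvent_le) auto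
  then show ?thesis
    by (simp add: norm_mult power2_eq_square)
qed

lemma Im_resolvent_diag_nonneg: "v \<in> T \<Longrightarrow> Im (R g v v) \<ge> 0"
  by (rule Im_hermitian_resolvent_diag_nonneg[OF finite_torus mat_hermitian_hamiltonian Im_z_pos
        resolvent_inverse(2)])

lemma resolvent_update_diff:
  assumes u: "u \<in> T" and v: "v \<in> T" and x: "x \<in> T"
  shows "R (h(x := s)) u v - R (h(x := t)) u v
       = R (h(x := s)) u x * complex_of_real (lam * (t - s)) * R (h(x := t)) x v"
  using x by (intro inverse_diff_diagonal_perturbation[OF finite_torus resolvent_inverse(3) resolvent_inverse(2) u v x])
    (auto simp: hamiltonian_def algebra_simps)

lemma isCont_resolvent_update:
  assumes u: "u \<in> T" and v: "v \<in> T" and x: "x \<in> T"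
  shows "isCont (\<lambda>s. R (h(x := s)) u v) t"
proof -
  have bound: "norm (R (h(x := s)) u v - R (h(x := t)) u v) \<le> \<bar>lam\<bar> / (Im z)\<^sup>2 * \<bar>s - t\<bar>" for s
  proof -
    have "cmod (R (h(x := s)) u v - R (h(x := t)) u v)
        = \<bar>lam\<bar> * \<bar>s - t\<bar> * cmod (R (h(x := s)) u x * R (h(x := t)) x v)"
      by (simp only: resolvent_update_diff[OF u v x] norm_mult norm_of_real abs_mult
          abs_minus_commute[of t s] mult_ac)
    also have "\<dots> \<le> \<bar>lam\<bar> * \<bar>s - t\<bar> * (1 / (Im z)\<^sup>2)"
      by (intro mult_left_mono norm_resolvent_mult_le) simp
    finally show ?thesis
      by simp
  qed
  have "((\<lambda>s. \<bar>lam\<bar> / (Im z)\<^sup>2 * \<bar>s - t\<bar>) \<longlongrightarrow> 0) (at t)"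
    using Im_z_pos by (auto intro!: tendsto_eq_intros)
  then have "((\<lambda>s. R (h(x := s)) u v - R (h(x := t)) u v) \<longlongrightarrow> 0) (at t)"
    by (rule Lim_null_comparison[OF always_eventually[OF allI[OF bound]]])
  then show ?thesis
    unfolding isCont_def by (simp add: Lim_null[symmetric])
qed

lemma resolvent_update_has_vector_derivative:
  assumes x: "x \<in> T" and y: "y \<in> T"
  shows "((\<lambda>s. R (h(x := s)) x y) has_vector_derivative
          (- complex_of_real lam * (R (h(x := t)) x x * R (h(x := t)) x y))) (at t)"
proof -
  let ?q = "\<lambda>s. - complex_of_real lam * (R (h(x := s)) x x * R (h(x := t)) x y)"
  have "((\<lambda>s. R (h(x := s)) x y) has_vector_derivative ?q t) (at t)"
  proof (rule has_vector_derivative_caratheodory[where q = ?q])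
    show "R (h(x := s)) x y - R (h(x := t)) x y = (s - t) *\<^sub>R ?q s" for s
      by (simp add: resolvent_update_diff[OF x y x] scaleR_conv_of_real algebra_simps)
    show "isCont ?q t"
      by (intro continuous_intros isCont_resolvent_update x y)
  qed
  then show ?thesis
    by simp
qed

lemma measurable_resolvent: "(\<lambda>g. R g x y) \<in> borel_measurable (gauss_field T)"
  unfolding resolvent_def
proof (rule measurable_mat_inv[OF finite_torus trivial_kernel_hamiltonian_shift])
  fix u v assume u: "u \<in> T" and v: "v \<in> T"
  have "(\<lambda>g. complex_of_real (lam * g u)) \<in> borel_measurable (gauss_field T)"
    using borel_measurable_gauss_field_component[OF u] by simp
  then show "(\<lambda>g. hamiltonian d L lam g u v - z * mat_id T u v) \<in> borel_measurable (gauss_field T)"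
    using u v by (cases "u = v") (simp_all add: hamiltonian_def)
qed

lemma integrable_resolvent: "integrable (gauss_field T) (\<lambda>g. R g x y)"
proof -
  interpret prob_space "gauss_field T"
    by (rule prob_space_gauss_field)
  show ?thesis
    using norm_resolvent_le measurable_resolvent by (intro integrable_const_bound[where B = "1 / Im z"]) auto
qed

lemma integrable_resolvent_mult: "integrable (gauss_field T) (\<lambda>g. R g u v * R g u' v')"
proof -
  interpret prob_space "gauss_field T"
    by (rule prob_space_gauss_field)
  show ?thesis
    using norm_resolvent_mult_le measurable_resolvent
    by (intro integrable_const_bound[where B = "1 / (Im z)\<^sup>2"]) auto
qed

lemma Im_theta_nonneg:
  assumes "L \<ge> 1"
  shows "Im theta \<ge> 0"
proof -
  have "Im theta = (\<integral>g. Im (R g origin origin) \<partial>gauss_field T)"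
    using integral_bounded_linear[OF bounded_linear_Im integrable_resolvent] by (simp add: expect_mat_def)
  also have "\<dots> \<ge> 0"
    using Im_resolvent_diag_nonneg origin_in_torus[OF assms] by (intro integral_nonneg_AE) auto
  finally show ?thesis .
qed

lemma resolvent_field_shift:
  assumes L: "L \<ge> 1" and a: "a \<in> T" and u: "u \<in> T" and v: "v \<in> T"
  shows "R (field_shift d L a g) u v = R g (torus_shift L a u) (torus_shift L a v)"
  unfolding resolvent_def
proof (rule mat_inv_reindex[OF finite_torus bij_betw_torus_shift[OF L a] _
      resolvent_inverse(2,3)[unfolded resolvent_def] u v])
  fix x y assume "x \<in> T" "y \<in> T"
  then show "hamiltonian d L lam (field_shift d L a g) x y - z * mat_id T x y
      = hamiltonian d L lam g (torus_shift L a x) (torus_shift L a y)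
        - z * mat_id T (torus_shift L a x) (torus_shift L a y)"
    using torus_shift_in_torus[OF L _ a] laplacian_torus_shift[OF L a] torus_shift_eq_iff[OF L a]
    by (simp add: hamiltonian_def mat_id_def field_shift_def)
qed

lemma expect_resolvent_diag_eq_theta:
  assumes L: "L \<ge> 1" and a: "a \<in> T"
  shows "ER a a = theta"
proof -
  have "theta = (\<integral>g. R g origin origin \<partial>distr (gauss_field T) (gauss_field T) (field_shift d L a))"
    using distr_gauss_field_shift[OF L a] by (simp add: expect_mat_def)
  also have "\<dots> = (\<integral>g. R (field_shift d L a g) origin origin \<partial>gauss_field T)"
    by (rule integral_distr[OF measurable_field_shift[OF L a] measurable_resolvent])
  also have "\<dots> = ER a a"
    using resolvent_field_shift[OF L a] origin_in_torus[OF L] torus_shift_origin[OF a]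
    by (simp add: expect_mat_def)
  finally show ?thesis
    by simp
qed

section \<open>The Schwinger--Dyson equation\<close>

lemma resolvent_equation:
  assumes x: "x \<in> T" and y: "y \<in> T"
  shows "mat_mult T (laplacian d L) (R g) x y + complex_of_real lam * (complex_of_real (g x) * R g x y)
      - z * R g x y = mat_id T x y"
proof -
  have "mat_mult T (hamiltonian d L lam g) (R g) x y
      = (\<Sum>w\<in>T. laplacian d L x w * R g w y + (if w = x then complex_of_real (lam * g x) * R g x y else 0))"
    using x y by (auto simp: mat_mult_def hamiltonian_def distrib_right intro!: sum.cong)
  also have "\<dots> = mat_mult T (laplacian d L) (R g) x y + complex_of_real lam * (complex_of_real (g x) * R g x y)"
    using x y by (simp add: sum.distrib mat_mult_def finite_torus)
  finally show ?thesis
    using resolvent_inverse(2)[of g] mat_mult_diff_smult_id[OF finite_torus x y, of "hamiltonian d L lam g" z "R g"]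
    by simp
qed

lemma expect_gauss_component_mult_resolvent:
  assumes x: "x \<in> T" and y: "y \<in> T"
  shows "(\<integral>g. complex_of_real (g x) * R g x y \<partial>gauss_field T)
       = - complex_of_real lam * (\<integral>g. R g x x * R g x y \<partial>gauss_field T)"
proof -
  have "(\<integral>g. complex_of_real (g x) * R g x y \<partial>gauss_field T) = (\<integral>g. g x *\<^sub>R R g x y \<partial>gauss_field T)"
    by (simp add: scaleR_conv_of_real)
  also have "\<dots> = (\<integral>g. - complex_of_real lam * (R g x x * R g x y) \<partial>gauss_field T)"
  proof (rule gaussian_integration_by_parts[OF finite_torus x, where C = "1 / Im z" and C' = "\<bar>lam\<bar> / (Im z)\<^sup>2"])
    show "(\<lambda>g. - complex_of_real lam * (R g x x * R g x y)) \<in> borel_measurable (gauss_field T)"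
      by (intro borel_measurable_times borel_measurable_const measurable_resolvent)
    show "cmod (- complex_of_real lam * (R g x x * R g x y)) \<le> \<bar>lam\<bar> / (Im z)\<^sup>2" for g
      using mult_left_mono[OF norm_resolvent_mult_le, of "\<bar>lam\<bar>"] by (simp add: norm_mult)
    show "isCont (\<lambda>s. - complex_of_real lam * (R (h(x := s)) x x * R (h(x := s)) x y)) t" for h t
      by (intro continuous_intros isCont_resolvent_update x y)
    show "((\<lambda>s. R (h(x := s)) x y) has_vector_derivative
        - complex_of_real lam * (R (h(x := t)) x x * R (h(x := t)) x y)) (at t)" for h t
      by (rule resolvent_update_has_vector_derivative[OF x y])
  qed (simp_all add: measurable_resolvent norm_resolvent_le)
  finally show ?thesis
    by simp
qed

lemma expect_resolvent_equation:
  assumes x: "x \<in> T" and y: "y \<in> T"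
  shows "mat_mult T (laplacian d L) ER x y - z * ER x y
      = mat_id T x y + complex_of_real (lam\<^sup>2) * (\<integral>g. R g x x * R g x y \<partial>gauss_field T)"
proof -
  interpret prob_space "gauss_field T"
    by (rule prob_space_gauss_field)
  let ?lap = "\<lambda>g. mat_mult T (laplacian d L) (R g) x y"
    and ?pot = "\<lambda>g. complex_of_real (g x) * R g x y"
  have int_lap: "integrable (gauss_field T) ?lap"
    using x y by (auto simp: mat_mult_def intro!: Bochner_Integration.integrable_sum integrable_mult_right integrable_resolvent)
  have int_pot: "integrable (gauss_field T) ?pot"
    using integrable_gauss_field_component_scaleR[OF x measurable_resolvent norm_resolvent_le]
    by (simp add: scaleR_conv_of_real)
  have lap: "(\<integral>g. ?lap g \<partial>gauss_field T) = mat_mult T (laplacian d L) ER x y"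
    using x y by (simp add: mat_mult_def expect_mat_def Bochner_Integration.integral_sum integrable_resolvent)
  have "mat_id T x y = (\<integral>g. ?lap g + complex_of_real lam * ?pot g - z * R g x y \<partial>gauss_field T)"
    using resolvent_equation[OF x y] prob_space by simp
  also have "\<dots> = mat_mult T (laplacian d L) ER x y + complex_of_real lam * (\<integral>g. ?pot g \<partial>gauss_field T)
      - z * ER x y"
    by (simp add: Bochner_Integration.integral_diff Bochner_Integration.integral_add
        Bochner_Integration.integrable_add int_lap int_pot integrable_resolvent lap expect_mat_def)
  finally show ?thesis
    by (simp add: expect_gauss_component_mult_resolvent[OF x y] power2_eq_square algebra_simps)
qed

lemma expect_diag_fluctuation_mult:
  assumes x: "x \<in> T" and y: "y \<in> T"
  shows "expect_mat T (\<lambda>g. mat_mult T (diag_part T (\<lambda>u v. R g u v - ER u v)) (R g)) x y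
       = (\<integral>g. R g x x * R g x y \<partial>gauss_field T) - ER x x * ER x y"
proof -
  have "mat_mult T (diag_part T (\<lambda>u v. R g u v - ER u v)) (R g) x y
      = (\<Sum>w\<in>T. if w = x then (R g x x - ER x x) * R g x y else 0)" for g
    using x y by (auto simp: mat_mult_def diag_part_def intro!: sum.cong)
  then have "mat_mult T (diag_part T (\<lambda>u v. R g u v - ER u v)) (R g) x y
      = R g x x * R g x y - ER x x * R g x y" for g
    using x by (simp add: finite_torus left_diff_distrib)
  then show ?thesis
    by (simp add: expect_mat_def Bochner_Integration.integral_diff integrable_resolvent_mult integrable_resolvent)
qed

lemma schwinger_dyson:
  assumes L: "L \<ge> 1" and x: "x \<in> T" and y: "y \<in> T"
  shows "mat_mult T (\<lambda>u v. laplacian d L u v - (z + complex_of_real (lam\<^sup>2) * theta) * mat_id T u v) ER x y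
       = mat_add T (mat_id T) (\<lambda>u v. complex_of_real (lam\<^sup>2) *
           expect_mat T (\<lambda>g. mat_mult T (diag_part T (\<lambda>u v. R g u v - ER u v)) (R g)) u v) x y"
proof -
  have "mat_mult T (\<lambda>u v. laplacian d L u v - (z + complex_of_real (lam\<^sup>2) * theta) * mat_id T u v) ER x y
      = mat_mult T (laplacian d L) ER x y - (z + complex_of_real (lam\<^sup>2) * theta) * ER x y"
    by (rule mat_mult_diff_smult_id[OF finite_torus x y])
  also have "\<dots> = mat_id T x y
      + complex_of_real (lam\<^sup>2) * ((\<integral>g. R g x x * R g x y \<partial>gauss_field T) - ER x x * ER x y)"
    using expect_resolvent_equation[OF x y] expect_resolvent_diag_eq_theta[OF L x]
    by (simp add: algebra_simps)
  also have "\<dots> = mat_add T (mat_id T) (\<lambda>u v. complex_of_real (lam\<^sup>2) *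
           expect_mat T (\<lambda>g. mat_mult T (diag_part T (\<lambda>u v. R g u v - ER u v)) (R g)) u v) x y"
    using expect_diag_fluctuation_mult[OF x y] x y by (simp add: mat_add_def)
  finally show ?thesis .
qed

end

theorem proposition1p4:
  fixes d L :: nat and lam :: real and z :: complex
  assumes "d \<ge> 2" and "lam > 0" and "L \<ge> 1" and "Im z > 0"
  defines "T \<equiv> torus d L"
  defines "R \<equiv> (\<lambda>g. resolvent d L lam g z)"
  defines "ER \<equiv> expect_mat T R"
  defines "theta \<equiv> ER origin origin"
  defines "M \<equiv> mat_inv T (\<lambda>x y. laplacian d L x y
                 - (z + complex_of_real (lam\<^sup>2) * theta) * mat_id T x y)"
  defines "Eloc \<equiv> (\<lambda>x y. complex_of_real (lam\<^sup>2) *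
                 expect_mat T (\<lambda>g. mat_mult T (diag_part T (\<lambda>u v. R g u v - ER u v)) (R g)) x y)"
  shows "\<forall>x\<in>T. \<forall>y\<in>T. ER x y = mat_mult T M (mat_add T (mat_id T) Eloc) x y"
proof -
  have res: "torus_resolvent z"
    using \<open>Im z > 0\<close> by unfold_locales
  have "Im theta \<ge> 0"
    unfolding theta_def ER_def R_def T_def by (rule torus_resolvent.Im_theta_nonneg[OF res \<open>L \<ge> 1\<close>])
  then have "Im (z + complex_of_real (lam\<^sup>2) * theta) > 0"
    using \<open>Im z > 0\<close> by (simp add: add_pos_nonneg)
  then have "mat_mult T M (\<lambda>x y. laplacian d L x y - (z + complex_of_real (lam\<^sup>2) * theta) * mat_id T x y)
      = mat_id T"
    unfolding M_def T_def
    by (intro mat_inv_inverse(3) finite_torus hermitian_shift_trivial_kernel mat_hermitian_laplacian) simp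
  moreover have "mat_mult T (\<lambda>x y. laplacian d L x y - (z + complex_of_real (lam\<^sup>2) * theta) * mat_id T x y) ER x y
      = mat_add T (mat_id T) Eloc x y" if "x \<in> T" "y \<in> T" for x y
    using torus_resolvent.schwinger_dyson[OF res \<open>L \<ge> 1\<close>] that
    unfolding Eloc_def theta_def ER_def R_def T_def by blast
  ultimately show ?thesis
    unfolding T_def by (blast intro: mat_mult_left_inverse_solve[OF finite_torus])
qed

end
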